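(* Let $d\geq1$, $T>0$ and $\xi=((s_i,t_i))_{1\leq i\leq n}$ with $s_i<t_i$, $[s_i,t_i]\subseteq[0,T]$ for all $i$ and $[s_i,t_i]\cap[s_j,t_j]=\emptyset$ for $i\neq j$. Then for every $u\in[0,\infty)^n$, \[\sigma_T^2(\xi,u)=1-\frac1T\sum_{i=1}^n\tau_i+\frac1T\sum_{i=1}^n\frac{\tau_i}{\tau_iu_i^2+1},\qquad\tau_i:=t_i-s_i.\]
   Context: $\mathcal W$ is the law of standard $d$-dimensional Brownian motion on $C([0,\infty),\mathbb R^d)$, $X_t(\mathbf x)=\mathbf x_t$, $X_{s,t}=X_t-X_s$. For $u\in[0,\infty)^n$, $\phi(\xi,u)=\mathbb E_{\mathcal W}[e^{-\sum_{i=1}^nu_i^2|X_{s_i,t_i}|^2/2}]$, $\mathbf P_{\xi,u}(\mathrm d\mathbf x)=\phi(\xi,u)^{-1}e^{-\sum_iu_i^2|\mathbf x_{t_i}-\mathbf x_{s_i}|^2/2}\mathcal W(\mathrm d\mathbf x)$, and $\sigma_T^2(\xi,u)=\frac1{dT}\mathbb E_{\mathbf P_{\xi,u}}[|X_T-X_0|^2]$. *)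

theory Defs
  imports "HOL-Probability.Probability"
begin

text \<open>Expectations under the Wiener
  measure W are expectations of functionals of such a process.\<close>

definition is_std_BM :: "'w measure \<Rightarrow> (real \<Rightarrow> 'w \<Rightarrow> 'a::euclidean_space) \<Rightarrow> bool" where
  "is_std_BM M B \<longleftrightarrow>
     prob_space M \<and>
     (\<forall>t\<ge>0. B t \<in> borel_measurable M) \<and>
     (\<forall>\<omega>\<in>space M. B 0 \<omega> = 0 \<and> continuous_on {0..} (\<lambda>t. B t \<omega>)) \<and>
     (\<forall>(ts::nat \<Rightarrow> real) k. 0 \<le> ts 0 \<and> (\<forall>m<k. ts m < ts (Suc m)) \<longrightarrow>
        prob_space.indep_vars M (\<lambda>_. borel)
          (\<lambda>(m, b) \<omega>. (B (ts (Suc m)) \<omega> - B (ts m) \<omega>) \<bullet> b) ({..<k} \<times> Basis) \<and>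
        (\<forall>m<k. \<forall>b\<in>Basis.
          distributed M lborel (\<lambda>\<omega>. (B (ts (Suc m)) \<omega> - B (ts m) \<omega>) \<bullet> b)
            (normal_density 0 (sqrt (ts (Suc m) - ts m)))))"

definition weight ::
  "(real \<Rightarrow> 'w \<Rightarrow> 'a::euclidean_space) \<Rightarrow> nat \<Rightarrow> (nat \<Rightarrow> real) \<Rightarrow> (nat \<Rightarrow> real)
     \<Rightarrow> (nat \<Rightarrow> real) \<Rightarrow> 'w \<Rightarrow> real" where
  "weight B n s t u \<omega> = exp (- (\<Sum>i<n. (u i)\<^sup>2 * (norm (B (t i) \<omega> - B (s i) \<omega>))\<^sup>2 / 2))"

definition phi ::
  "'w measure \<Rightarrow> (real \<Rightarrow> 'w \<Rightarrow> 'a::euclidean_space) \<Rightarrow> nat \<Rightarrow> (nat \<Rightarrow> real)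
     \<Rightarrow> (nat \<Rightarrow> real) \<Rightarrow> (nat \<Rightarrow> real) \<Rightarrow> real" where
  "phi M B n s t u = (\<integral>\<omega>. weight B n s t u \<omega> \<partial>M)"

text \<open>\<open>\<sigma>_T^2(\<xi>,u) = (1/(dT)) E_{P_{\<xi>,u}}[|X_T - X_0|^2]\<close>, where
  \<open>P_{\<xi>,u} = \<phi>^{-1} weight \<cdot> W\<close>.\<close>
definition sigma2 ::
  "'w measure \<Rightarrow> (real \<Rightarrow> 'w \<Rightarrow> 'a::euclidean_space) \<Rightarrow> real \<Rightarrow> nat \<Rightarrow> (nat \<Rightarrow> real)
     \<Rightarrow> (nat \<Rightarrow> real) \<Rightarrow> (nat \<Rightarrow> real) \<Rightarrow> real" where
  "sigma2 M B T n s t u =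
     1 / (real DIM('a) * T) *
       ((\<integral>\<omega>. (norm (B T \<omega> - B 0 \<omega>))\<^sup>2 * weight B n s t u \<omega> \<partial>M) / phi M B n s t u)"

end

theory Submission
  imports Defs
begin

text \<open>Refine the time grid to \<open>0 = r 0 < \<dots> < r k = T\<close>, the points being \<open>0\<close>, \<open>T\<close> and all
  \<open>s i\<close>, \<open>t i\<close>; by disjointness every \<open>[s i, t i]\<close> is a single grid cell. The weight is then a
  product, over cells \<open>m\<close> and coordinates, of \<open>exp (- c m * Y\<^sup>2 / 2)\<close>, where the coordinates \<open>Y\<close> of
  the increments are independent \<open>N(0, \<delta> m)\<close> with \<open>\<delta> m = r (m + 1) - r m\<close>, and \<open>c m\<close> is \<open>(u i)\<^sup>2\<close>
  on the cell \<open>[s i, t i]\<close> and \<open>0\<close> on the other cells. The density of \<open>N(0, \<delta>)\<close> times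
  \<open>exp (- c y\<^sup>2 / 2)\<close> is \<open>1 / sqrt (1 + c \<delta>)\<close> times the density of \<open>N(0, \<delta> / (1 + c \<delta>))\<close>, so under
  the tilted measure the coordinates are still independent and centred, with variances
  \<open>\<delta> m / (1 + c m \<delta> m)\<close>. Summing over coordinates and cells, a free cell contributes its length
  and the cell \<open>[s i, t i]\<close> contributes \<open>\<tau> i / (1 + (u i)\<^sup>2 \<tau> i)\<close>.\<close>

lemma normal_density_mult_gaussian:
  fixes \<sigma> c x :: real
  assumes "\<sigma> > 0" and "c \<ge> 0"
  shows "normal_density 0 \<sigma> x * exp (- (c * x\<^sup>2 / 2)) =
     normal_density 0 (\<sigma> / sqrt (1 + c * \<sigma>\<^sup>2)) x / sqrt (1 + c * \<sigma>\<^sup>2)"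
proof -
  define q where "q = 1 + c * \<sigma>\<^sup>2"
  have q: "q > 0" using assms unfolding q_def by (simp add: add_pos_nonneg)
  have exp_eq: "exp (- x\<^sup>2 / (2 * \<sigma>\<^sup>2)) * exp (- (c * x\<^sup>2 / 2)) = exp (- x\<^sup>2 / (2 * (\<sigma> / sqrt q)\<^sup>2))"
    unfolding exp_add[symmetric] using assms q by (simp add: power_divide q_def field_simps)
  have sqrt_eq: "sqrt (2 * pi * (\<sigma> / sqrt q)\<^sup>2) = sqrt (2 * pi * \<sigma>\<^sup>2) / sqrt q"
    using q by (simp add: power_divide real_sqrt_divide)
  show ?thesis
    unfolding q_def[symmetric] normal_density_def using q assms exp_eq sqrt_eq by (simp add: field_simps)
qed

definition tilted_normal_moment :: "real \<Rightarrow> real \<Rightarrow> nat \<Rightarrow> real" where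
  "tilted_normal_moment \<sigma> c p = (\<integral>x. normal_density 0 \<sigma> x * (x ^ p * exp (- (c * x\<^sup>2 / 2))) \<partial>lborel)"

lemma
  fixes \<sigma> c :: real
  assumes "\<sigma> > 0" and "c \<ge> 0"
  shows integrable_tilted_normal_moment:
      "integrable lborel (\<lambda>x. normal_density 0 \<sigma> x * (x ^ p * exp (- (c * x\<^sup>2 / 2))))"
    and tilted_normal_moment_eq:
      "tilted_normal_moment \<sigma> c p =
         (\<integral>x. normal_density 0 (\<sigma> / sqrt (1 + c * \<sigma>\<^sup>2)) x * x ^ p \<partial>lborel) / sqrt (1 + c * \<sigma>\<^sup>2)"
proof -
  have eq: "normal_density 0 \<sigma> x * (x ^ p * exp (- (c * x\<^sup>2 / 2))) =
     normal_density 0 (\<sigma> / sqrt (1 + c * \<sigma>\<^sup>2)) x * (x - 0) ^ p / sqrt (1 + c * \<sigma>\<^sup>2)" for x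
    using normal_density_mult_gaussian[OF assms, of x] by (simp add: algebra_simps)
  show "integrable lborel (\<lambda>x. normal_density 0 \<sigma> x * (x ^ p * exp (- (c * x\<^sup>2 / 2))))"
    unfolding eq using assms by (intro integrable_divide integrable_normal_moment) (simp add: add_pos_nonneg)
  show "tilted_normal_moment \<sigma> c p =
      (\<integral>x. normal_density 0 (\<sigma> / sqrt (1 + c * \<sigma>\<^sup>2)) x * x ^ p \<partial>lborel) / sqrt (1 + c * \<sigma>\<^sup>2)"
    unfolding tilted_normal_moment_def eq by simp
qed

lemma
  fixes \<sigma> c :: real
  assumes "\<sigma> > 0" and "c \<ge> 0"
  shows tilted_normal_moment_0: "tilted_normal_moment \<sigma> c 0 = 1 / sqrt (1 + c * \<sigma>\<^sup>2)"
    and tilted_normal_moment_1: "tilted_normal_moment \<sigma> c 1 = 0"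
    and tilted_normal_moment_2:
      "tilted_normal_moment \<sigma> c 2 = \<sigma>\<^sup>2 / (1 + c * \<sigma>\<^sup>2) * tilted_normal_moment \<sigma> c 0"
proof -
  have q: "1 + c * \<sigma>\<^sup>2 > 0" using assms by (simp add: add_pos_nonneg)
  have \<sigma>': "\<sigma> / sqrt (1 + c * \<sigma>\<^sup>2) > 0" using assms q by simp
  show "tilted_normal_moment \<sigma> c 0 = 1 / sqrt (1 + c * \<sigma>\<^sup>2)"
    using tilted_normal_moment_eq[OF assms, of 0] integral_normal_density[OF \<sigma>'] by simp
  show "tilted_normal_moment \<sigma> c 1 = 0"
    using tilted_normal_moment_eq[OF assms, of 1]
      integral_normal_moment_odd[OF \<sigma>', where k=0 and \<mu>=0] by simp
  have "(\<integral>x. normal_density 0 (\<sigma> / sqrt (1 + c * \<sigma>\<^sup>2)) x * x ^ 2 \<partial>lborel) = \<sigma>\<^sup>2 / (1 + c * \<sigma>\<^sup>2)"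
  proof -
    have "2 * \<sigma>\<^sup>2 / (2 + 2 * (c * \<sigma>\<^sup>2)) = \<sigma>\<^sup>2 / (1 + c * \<sigma>\<^sup>2)"
      using q by (simp add: field_simps)
    then show ?thesis
      using integral_normal_moment_even[OF \<sigma>', where k=1 and \<mu>=0] q by (simp add: power_divide)
  qed
  then show "tilted_normal_moment \<sigma> c 2 = \<sigma>\<^sup>2 / (1 + c * \<sigma>\<^sup>2) * tilted_normal_moment \<sigma> c 0"
    using tilted_normal_moment_eq[OF assms, of 2] tilted_normal_moment_eq[OF assms, of 0]
      integral_normal_density[OF \<sigma>'] by simp
qed

locale indep_centered_gaussians = prob_space +
  fixes J :: "'j set" and Y :: "'j \<Rightarrow> 'a \<Rightarrow> real" and \<sigma> :: "'j \<Rightarrow> real"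
  assumes finite_index: "finite J"
    and indep: "indep_vars (\<lambda>_. borel) Y J"
    and distributed_normal: "j \<in> J \<Longrightarrow> distributed M lborel (Y j) (normal_density 0 (\<sigma> j))"
    and std_pos: "j \<in> J \<Longrightarrow> \<sigma> j > 0"
begin

definition tilt :: "('j \<Rightarrow> real) \<Rightarrow> 'a \<Rightarrow> real" where
  "tilt c \<omega> = (\<Prod>j\<in>J. exp (- (c j * (Y j \<omega>)\<^sup>2 / 2)))"

definition tilt_mass :: "('j \<Rightarrow> real) \<Rightarrow> real" where
  "tilt_mass c = (\<Prod>j\<in>J. 1 / sqrt (1 + c j * (\<sigma> j)\<^sup>2))"

lemma tilt_mass_pos: "(\<And>j. j \<in> J \<Longrightarrow> c j \<ge> 0) \<Longrightarrow> tilt_mass c > 0"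
  unfolding tilt_mass_def by (intro prod_pos) (simp add: add_pos_nonneg)

lemma has_bochner_integral_tilted_moments:
  assumes c: "\<And>j. j \<in> J \<Longrightarrow> c j \<ge> 0"
  shows "has_bochner_integral M (\<lambda>\<omega>. \<Prod>j\<in>J. Y j \<omega> ^ p j * exp (- (c j * (Y j \<omega>)\<^sup>2 / 2)))
           (\<Prod>j\<in>J. tilted_normal_moment (\<sigma> j) (c j) (p j))"
proof -
  define h where "h j y = y ^ p j * exp (- (c j * y\<^sup>2 / 2))" for j y
  have h_measurable: "h j \<in> borel_measurable borel" for j
    unfolding h_def by measurable
  have indep_h: "indep_vars (\<lambda>_. borel) (\<lambda>j \<omega>. h j (Y j \<omega>)) J"
    by (rule indep_vars_compose2[OF indep]) (simp add: h_measurable)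
  have h_integral: "has_bochner_integral M (\<lambda>\<omega>. h j (Y j \<omega>)) (tilted_normal_moment (\<sigma> j) (c j) (p j))"
    if j: "j \<in> J" for j
    unfolding has_bochner_integral_iff
    using distributed_integrable[OF distributed_normal[OF j], of "h j"]
      distributed_integral[OF distributed_normal[OF j], of "h j"]
      integrable_tilted_normal_moment[OF std_pos[OF j] c[OF j]]
    by (simp add: h_measurable tilted_normal_moment_def h_def)
  show ?thesis
    unfolding has_bochner_integral_iff h_def[symmetric]
    using indep_vars_integrable[OF finite_index indep_h] indep_vars_lebesgue_integral[OF finite_index indep_h]
      h_integral by (simp add: has_bochner_integral_iff)
qed

lemma has_bochner_integral_tilt:
  assumes "\<And>j. j \<in> J \<Longrightarrow> c j \<ge> 0"
  shows "has_bochner_integral M (tilt c) (tilt_mass c)"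
  using has_bochner_integral_tilted_moments[OF assms, where p="\<lambda>_. 0"]
  by (simp add: tilt_def[abs_def] tilt_mass_def tilted_normal_moment_0 std_pos assms cong: prod.cong)

lemma has_bochner_integral_tilted_product:
  assumes c: "\<And>j. j \<in> J \<Longrightarrow> c j \<ge> 0" and a: "a \<in> J" and b: "b \<in> J"
  shows "has_bochner_integral M (\<lambda>\<omega>. Y a \<omega> * Y b \<omega> * tilt c \<omega>)
           (if a = b then (\<sigma> a)\<^sup>2 / (1 + c a * (\<sigma> a)\<^sup>2) * tilt_mass c else 0)"
proof -
  define p where "p j = (if j = a then 1 else 0) + (if j = b then 1 else (0::nat))" for j
  have "(\<Prod>j\<in>J. Y j \<omega> ^ p j) = Y a \<omega> * Y b \<omega>" for \<omega>
    unfolding p_def power_add prod.distrib using finite_index a b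
    by (simp add: if_distrib prod.delta cong: if_cong)
  then have integrand: "Y a \<omega> * Y b \<omega> * tilt c \<omega> = (\<Prod>j\<in>J. Y j \<omega> ^ p j * exp (- (c j * (Y j \<omega>)\<^sup>2 / 2)))"
    for \<omega> by (simp add: tilt_def prod.distrib)
  have moment0: "tilted_normal_moment (\<sigma> j) (c j) 0 = 1 / sqrt (1 + c j * (\<sigma> j)\<^sup>2)" if "j \<in> J" for j
    by (rule tilted_normal_moment_0[OF std_pos[OF that] c[OF that]])
  have "(\<Prod>j\<in>J. tilted_normal_moment (\<sigma> j) (c j) (p j)) =
      tilted_normal_moment (\<sigma> a) (c a) (p a) * (\<Prod>j\<in>J - {a}. tilted_normal_moment (\<sigma> j) (c j) (p j))"
    using finite_index a by (simp add: prod.remove)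
  also have "\<dots> = (if a = b then (\<sigma> a)\<^sup>2 / (1 + c a * (\<sigma> a)\<^sup>2) * tilt_mass c else 0)"
  proof (cases "a = b")
    case True
    have "(\<Prod>j\<in>J - {a}. tilted_normal_moment (\<sigma> j) (c j) (p j)) = (\<Prod>j\<in>J - {a}. 1 / sqrt (1 + c j * (\<sigma> j)\<^sup>2))"
      by (rule prod.cong) (auto simp: p_def True moment0)
    moreover have "tilted_normal_moment (\<sigma> a) (c a) (p a) = (\<sigma> a)\<^sup>2 / (1 + c a * (\<sigma> a)\<^sup>2) * (1 / sqrt (1 + c a * (\<sigma> a)\<^sup>2))"
    proof -
      have "p a = 2" by (simp add: p_def True)
      then show ?thesis using tilted_normal_moment_2[OF std_pos[OF a] c[OF a]] moment0[OF a] by simp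
    qed
    ultimately show ?thesis
      using True finite_index a by (simp add: tilt_mass_def prod.remove)
  next
    case False
    then have "p a = 1" by (simp add: p_def)
    then show ?thesis using False tilted_normal_moment_1[OF std_pos[OF a] c[OF a]] by simp
  qed
  finally have moments: "(\<Prod>j\<in>J. tilted_normal_moment (\<sigma> j) (c j) (p j)) =
      (if a = b then (\<sigma> a)\<^sup>2 / (1 + c a * (\<sigma> a)\<^sup>2) * tilt_mass c else 0)" .
  show ?thesis
    unfolding integrand moments[symmetric] by (rule has_bochner_integral_tilted_moments[OF c])
qed

lemma has_bochner_integral_tilted_square_sum:
  assumes c: "\<And>j. j \<in> J \<Longrightarrow> c j \<ge> 0" and A: "A \<subseteq> J"
  shows "has_bochner_integral M (\<lambda>\<omega>. (\<Sum>a\<in>A. Y a \<omega>)\<^sup>2 * tilt c \<omega>)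
           ((\<Sum>a\<in>A. (\<sigma> a)\<^sup>2 / (1 + c a * (\<sigma> a)\<^sup>2)) * tilt_mass c)"
proof -
  have "finite A" using A finite_index by (rule finite_subset)
  have integrand: "(\<Sum>a\<in>A. Y a \<omega>)\<^sup>2 * tilt c \<omega> = (\<Sum>a\<in>A. \<Sum>b\<in>A. Y a \<omega> * Y b \<omega> * tilt c \<omega>)" for \<omega>
    by (simp add: power2_eq_square sum_product sum_distrib_right sum_distrib_left mult_ac)
  have "(\<Sum>a\<in>A. \<Sum>b\<in>A. if a = b then (\<sigma> a)\<^sup>2 / (1 + c a * (\<sigma> a)\<^sup>2) * tilt_mass c else 0) =
      (\<Sum>a\<in>A. (\<sigma> a)\<^sup>2 / (1 + c a * (\<sigma> a)\<^sup>2)) * tilt_mass c"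
    using \<open>finite A\<close> by (simp add: sum_distrib_right)
  moreover have "has_bochner_integral M (\<lambda>\<omega>. \<Sum>a\<in>A. \<Sum>b\<in>A. Y a \<omega> * Y b \<omega> * tilt c \<omega>)
      (\<Sum>a\<in>A. \<Sum>b\<in>A. if a = b then (\<sigma> a)\<^sup>2 / (1 + c a * (\<sigma> a)\<^sup>2) * tilt_mass c else 0)"
    using A by (intro has_bochner_integral_sum has_bochner_integral_tilted_product[OF c]) auto
  ultimately show ?thesis unfolding integrand by simp
qed

end

lemma power2_norm_eq_sum_Basis: "(norm (x::'a::euclidean_space))\<^sup>2 = (\<Sum>b\<in>Basis. (x \<bullet> b)\<^sup>2)"
  unfolding power2_norm_eq_inner by (subst euclidean_inner) (simp add: power2_eq_square)

lemma std_BM_grid_increments: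
  fixes B :: "real \<Rightarrow> 'w \<Rightarrow> 'a::euclidean_space" and ts :: "nat \<Rightarrow> real"
  assumes BM: "is_std_BM M B" and "0 \<le> ts 0" and "\<And>m. m < k \<Longrightarrow> ts m < ts (Suc m)"
  shows "indep_centered_gaussians M ({..<k} \<times> Basis)
           (\<lambda>(m, b) \<omega>. (B (ts (Suc m)) \<omega> - B (ts m) \<omega>) \<bullet> b) (\<lambda>(m, b). sqrt (ts (Suc m) - ts m))"
proof -
  have "prob_space M" using BM unfolding is_std_BM_def by blast
  moreover have
    "prob_space.indep_vars M (\<lambda>_. borel)
        (\<lambda>(m, b) \<omega>. (B (ts (Suc m)) \<omega> - B (ts m) \<omega>) \<bullet> b) ({..<k} \<times> Basis) \<and>
     (\<forall>m<k. \<forall>b\<in>Basis. distributed M lborel (\<lambda>\<omega>. (B (ts (Suc m)) \<omega> - B (ts m) \<omega>) \<bullet> b)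
        (normal_density 0 (sqrt (ts (Suc m) - ts m))))"
    using BM assms(2,3) unfolding is_std_BM_def by blast
  ultimately show ?thesis
    using assms(3)
    by (intro indep_centered_gaussians.intro indep_centered_gaussians_axioms.intro) auto
qed

lemma std_BM_tilted_second_moment:
  fixes B :: "real \<Rightarrow> 'w \<Rightarrow> 'a::euclidean_space" and ts c :: "nat \<Rightarrow> real"
  assumes BM: "is_std_BM M B" and ts0: "0 \<le> ts 0" and ts_mono: "\<And>m. m < k \<Longrightarrow> ts m < ts (Suc m)"
    and c: "\<And>m. m < k \<Longrightarrow> c m \<ge> 0"
  defines "G \<omega> \<equiv> exp (- (\<Sum>m<k. c m * (norm (B (ts (Suc m)) \<omega> - B (ts m) \<omega>))\<^sup>2 / 2))"
  shows "(\<integral>\<omega>. (norm (B (ts k) \<omega> - B (ts 0) \<omega>))\<^sup>2 * G \<omega> \<partial>M) / (\<integral>\<omega>. G \<omega> \<partial>M) =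
           real DIM('a) * (\<Sum>m<k. (ts (Suc m) - ts m) / (1 + c m * (ts (Suc m) - ts m)))"
proof -
  define J where "J = {..<k} \<times> (Basis :: 'a set)"
  define D where "D m \<omega> = B (ts (Suc m)) \<omega> - B (ts m) \<omega>" for m \<omega>
  define Y where "Y = (\<lambda>(m, b) \<omega>. D m \<omega> \<bullet> (b::'a))"
  define \<sigma> where "\<sigma> = (\<lambda>(m, b::'a). sqrt (ts (Suc m) - ts m))"
  define cJ where "cJ = (\<lambda>(m, b::'a). c m)"
  define R where "R = (\<Sum>m<k. (ts (Suc m) - ts m) / (1 + c m * (ts (Suc m) - ts m)))"
  interpret indep_centered_gaussians M J Y \<sigma>
    unfolding J_def Y_def D_def \<sigma>_def by (rule std_BM_grid_increments[OF BM ts0 ts_mono])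
  have cJ: "cJ j \<ge> 0" if "j \<in> J" for j
    using that c unfolding J_def cJ_def by auto
  have tilt_eq: "tilt cJ \<omega> = G \<omega>" for \<omega>
  proof -
    have "(\<Sum>j\<in>J. cJ j * (Y j \<omega>)\<^sup>2 / 2) = (\<Sum>(m, b)\<in>J. c m * (D m \<omega> \<bullet> b)\<^sup>2 / 2)"
      by (rule sum.cong) (auto simp: cJ_def Y_def)
    also have "\<dots> = (\<Sum>m<k. c m * (norm (D m \<omega>))\<^sup>2 / 2)"
      unfolding J_def sum.cartesian_product[symmetric] power2_norm_eq_sum_Basis
      by (simp add: sum_distrib_left sum_divide_distrib)
    finally have "(\<Sum>j\<in>J. cJ j * (Y j \<omega>)\<^sup>2 / 2) = (\<Sum>m<k. c m * (norm (D m \<omega>))\<^sup>2 / 2)" .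
    then show ?thesis
      unfolding tilt_def G_def D_def using finite_index by (simp add: exp_sum[symmetric] sum_negf)
  qed
  define A where "A b = (\<lambda>m. (m, b)) ` {..<k}" for b :: 'a
  have A_sub: "A b \<subseteq> J" if "b \<in> Basis" for b
    using that unfolding A_def J_def by auto
  have sum_A: "(\<Sum>a\<in>A b. f a) = (\<Sum>m<k. f (m, b))" for b and f :: "nat \<times> 'a \<Rightarrow> real"
    unfolding A_def by (simp add: sum.reindex inj_on_def)
  have square_eq: "(norm (B (ts k) \<omega> - B (ts 0) \<omega>))\<^sup>2 = (\<Sum>b\<in>Basis. (\<Sum>a\<in>A b. Y a \<omega>)\<^sup>2)" for \<omega>
  proof -
    have "B (ts k) \<omega> - B (ts 0) \<omega> = (\<Sum>m<k. D m \<omega>)"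
      unfolding D_def by (rule sum_lessThan_telescope[symmetric])
    then show ?thesis
      unfolding power2_norm_eq_sum_Basis sum_A by (simp add: Y_def inner_sum_left)
  qed
  have ratio_eq: "(\<Sum>a\<in>A b. (\<sigma> a)\<^sup>2 / (1 + cJ a * (\<sigma> a)\<^sup>2)) = R" for b
    unfolding sum_A R_def using ts_mono by (intro sum.cong) (auto simp: \<sigma>_def cJ_def less_imp_le)
  have "has_bochner_integral M (\<lambda>\<omega>. \<Sum>b\<in>Basis. (\<Sum>a\<in>A b. Y a \<omega>)\<^sup>2 * tilt cJ \<omega>)
      (\<Sum>b\<in>(Basis::'a set). R * tilt_mass cJ)"
    using has_bochner_integral_tilted_square_sum[of cJ, OF cJ A_sub] unfolding ratio_eq
    by (intro has_bochner_integral_sum) auto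
  then have "(\<integral>\<omega>. (norm (B (ts k) \<omega> - B (ts 0) \<omega>))\<^sup>2 * G \<omega> \<partial>M) = real DIM('a) * R * tilt_mass cJ"
    unfolding square_eq tilt_eq sum_distrib_right[symmetric] by (simp add: has_bochner_integral_iff)
  moreover have "(\<integral>\<omega>. G \<omega> \<partial>M) = tilt_mass cJ"
    using has_bochner_integral_tilt[of cJ, OF cJ] unfolding tilt_eq by (simp add: has_bochner_integral_iff)
  ultimately show ?thesis
    using tilt_mass_pos[of cJ, OF cJ] unfolding R_def by simp
qed

lemma sorted_wrt_less_nth_0_eqI:
  fixes L :: "'a::linorder list"
  assumes "sorted_wrt (<) L" and "x \<in> set L" and "\<And>z. z \<in> set L \<Longrightarrow> x \<le> z"
  shows "L ! 0 = x"
proof -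
  obtain j where j: "j < length L" "L ! j = x" using assms(2) by (metis in_set_conv_nth)
  have "L ! 0 \<le> x"
    using sorted_nth_mono[OF strict_sorted_imp_sorted[OF assms(1)], of 0 j] j by simp
  moreover have "L ! 0 \<in> set L" using j by (intro nth_mem) auto
  then have "x \<le> L ! 0" by (rule assms(3))
  ultimately show ?thesis by simp
qed

lemma sorted_wrt_less_nth_last_eqI:
  fixes L :: "'a::linorder list"
  assumes "sorted_wrt (<) L" and "x \<in> set L" and "\<And>z. z \<in> set L \<Longrightarrow> z \<le> x"
  shows "L ! (length L - 1) = x"
proof -
  obtain j where j: "j < length L" "L ! j = x" using assms(2) by (metis in_set_conv_nth)
  have "x \<le> L ! (length L - 1)"
    using sorted_nth_mono[OF strict_sorted_imp_sorted[OF assms(1)], of j "length L - 1"] j by simp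
  moreover have "L ! (length L - 1) \<in> set L" using j by (intro nth_mem) auto
  then have "L ! (length L - 1) \<le> x" by (rule assms(3))
  ultimately show ?thesis by simp
qed

lemma sorted_wrt_less_consecutive:
  fixes L :: "'a::linorder list"
  assumes sorted: "sorted_wrt (<) L" and x: "x \<in> set L" and y: "y \<in> set L" and "x < y"
    and gap: "\<And>z. z \<in> set L \<Longrightarrow> x < z \<Longrightarrow> z < y \<Longrightarrow> False"
  shows "\<exists>m. Suc m < length L \<and> L ! m = x \<and> L ! Suc m = y"
proof -
  obtain i where i: "i < length L" "L ! i = x" using x by (metis in_set_conv_nth)
  obtain j where j: "j < length L" "L ! j = y" using y by (metis in_set_conv_nth)
  have "i < j"
    using sorted_wrt_nth_less[OF sorted, of j i] i j \<open>x < y\<close> by (metis less_asym linorder_neqE_nat)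
  moreover have "\<not> Suc i < j"
    using gap[of "L ! Suc i"] sorted_wrt_nth_less[OF sorted, of i "Suc i"]
      sorted_wrt_nth_less[OF sorted, of "Suc i" j] i j by auto
  ultimately have "j = Suc i" by simp
  then show ?thesis using i j by auto
qed

lemma disjoint_intervals_grid:
  fixes T :: real and s t :: "nat \<Rightarrow> real"
  assumes T: "0 \<le> T"
    and st: "\<And>i. i < n \<Longrightarrow> s i < t i \<and> 0 \<le> s i \<and> t i \<le> T"
    and disj: "\<And>i j. i < n \<Longrightarrow> j < n \<Longrightarrow> i \<noteq> j \<Longrightarrow> {s i..t i} \<inter> {s j..t j} = {}"
  obtains ts :: "nat \<Rightarrow> real" and k cell where "ts 0 = 0" and "ts k = T"
    and "\<And>m. m < k \<Longrightarrow> ts m < ts (Suc m)" and "inj_on cell {..<n}"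
    and "\<And>i. i < n \<Longrightarrow> cell i < k \<and> ts (cell i) = s i \<and> ts (Suc (cell i)) = t i"
proof -
  define P where "P = {0, T} \<union> s ` {..<n} \<union> t ` {..<n}"
  define L where "L = sorted_list_of_set P"
  have "finite P" unfolding P_def by simp
  then have L: "sorted_wrt (<) L" "set L = P"
    unfolding L_def by simp_all
  have P_bounds: "0 \<le> z \<and> z \<le> T" if "z \<in> P" for z
    using that st T unfolding P_def by (force intro: less_imp_le order.trans)
  have ts0: "L ! 0 = 0"
    by (rule sorted_wrt_less_nth_0_eqI) (use L P_bounds in \<open>auto simp: P_def\<close>)
  have tsk: "L ! (length L - 1) = T"
    by (rule sorted_wrt_less_nth_last_eqI) (use L P_bounds in \<open>auto simp: P_def\<close>)
  have mono: "L ! m < L ! Suc m" if "m < length L - 1" for m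
    using sorted_wrt_nth_less[OF L(1), of m "Suc m"] that by simp
  have gap: False if i: "i < n" and z: "z \<in> P" "s i < z" "z < t i" for i z
  proof -
    have "z \<in> {s i..t i}" using z by simp
    moreover obtain j where "j < n" "j \<noteq> i" "z = s j \<or> z = t j"
      using z st[OF i] unfolding P_def by auto
    ultimately show False using disj[OF i, of j] st[of j] by auto
  qed
  have "\<exists>m. Suc m < length L \<and> L ! m = s i \<and> L ! Suc m = t i" if "i < n" for i
    using that st[OF that] gap[OF that] L
    by (intro sorted_wrt_less_consecutive) (auto simp: P_def)
  then obtain cell where cell: "\<And>i. i < n \<Longrightarrow> Suc (cell i) < length L \<and> L ! cell i = s i \<and> L ! Suc (cell i) = t i"
    by metis
  have "inj_on cell {..<n}"
  proof (rule inj_onI)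
    fix i j assume "i \<in> {..<n}" "j \<in> {..<n}" "cell i = cell j"
    then have "s i \<in> {s i..t i} \<inter> {s j..t j}" using cell[of i] cell[of j] st[of i] by auto
    then show "i = j" using disj[of i j] \<open>i \<in> {..<n}\<close> \<open>j \<in> {..<n}\<close> by auto
  qed
  then show ?thesis
    using that[of "\<lambda>m. L ! m" "length L - 1" cell] ts0 tsk mono cell by fastforce
qed

lemma sum_tilted_increment_variances:
  fixes ts s t u :: "nat \<Rightarrow> real"
  assumes ts0: "ts 0 = 0" and tsk: "ts k = T" and inj: "inj_on cell {..<n}"
    and cell: "\<And>i. i < n \<Longrightarrow> cell i < k \<and> ts (cell i) = s i \<and> ts (Suc (cell i)) = t i"
  shows "(\<Sum>m<k. (ts (Suc m) - ts m) / (1 + (\<Sum>i | i < n \<and> cell i = m. (u i)\<^sup>2) * (ts (Suc m) - ts m)))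
           = T - (\<Sum>i<n. t i - s i) + (\<Sum>i<n. (t i - s i) / ((t i - s i) * (u i)\<^sup>2 + 1))"
proof -
  define \<delta> where "\<delta> m = ts (Suc m) - ts m" for m
  define c where "c m = (\<Sum>i | i < n \<and> cell i = m. (u i)\<^sup>2)" for m
  define g where "g m = \<delta> m / (1 + c m * \<delta> m) - \<delta> m" for m
  have g_off_cells: "g m = 0" if "m \<notin> cell ` {..<n}" for m
  proof -
    have "{i. i < n \<and> cell i = m} = {}" using that by auto
    then have "c m = 0" unfolding c_def by (metis sum.empty)
    then show ?thesis by (simp add: g_def)
  qed
  have g_cell: "g (cell i) = (t i - s i) / ((t i - s i) * (u i)\<^sup>2 + 1) - (t i - s i)" if "i < n" for i
  proof -
    have "{j. j < n \<and> cell j = cell i} = {i}" using inj that by (auto dest: inj_onD)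
    then show ?thesis using cell[OF that] by (simp add: g_def c_def \<delta>_def mult.commute)
  qed
  have "(\<Sum>m<k. g m) = (\<Sum>m\<in>cell ` {..<n}. g m)"
    by (rule sum.mono_neutral_right) (use cell g_off_cells in auto)
  also have "\<dots> = (\<Sum>i<n. (t i - s i) / ((t i - s i) * (u i)\<^sup>2 + 1) - (t i - s i))"
    by (simp add: sum.reindex[OF inj] g_cell)
  finally have "(\<Sum>m<k. g m) = (\<Sum>i<n. (t i - s i) / ((t i - s i) * (u i)\<^sup>2 + 1)) - (\<Sum>i<n. t i - s i)"
    by (simp add: sum_subtractf)
  moreover have "(\<Sum>m<k. \<delta> m) = T"
    unfolding \<delta>_def sum_lessThan_telescope ts0 tsk by simp
  ultimately show ?thesis
    unfolding \<delta>_def[symmetric] c_def[symmetric] by (simp add: g_def sum_subtractf)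
qed

theorem lemma2:
  fixes M :: "'w measure" and B :: "real \<Rightarrow> 'w \<Rightarrow> 'a::euclidean_space"
    and T :: real and n :: nat and s t u :: "nat \<Rightarrow> real"
  assumes BM: "is_std_BM M B"
    and T: "T > 0"
    and st: "\<And>i. i < n \<Longrightarrow> s i < t i \<and> 0 \<le> s i \<and> t i \<le> T"
    and disj: "\<And>i j. i < n \<Longrightarrow> j < n \<Longrightarrow> i \<noteq> j \<Longrightarrow> {s i..t i} \<inter> {s j..t j} = {}"
    and u: "\<And>i. i < n \<Longrightarrow> u i \<ge> 0"
  shows "sigma2 M B T n s t u =
           1 - (1 / T) * (\<Sum>i<n. t i - s i)
             + (1 / T) * (\<Sum>i<n. (t i - s i) / ((t i - s i) * (u i)\<^sup>2 + 1))"
proof -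
  obtain ts k cell where ts0: "ts 0 = 0" and tsk: "ts k = T" and mono: "\<And>m. m < k \<Longrightarrow> ts m < ts (Suc m)"
    and inj: "inj_on cell {..<n}"
    and cell: "\<And>i. i < n \<Longrightarrow> cell i < k \<and> ts (cell i) = s i \<and> ts (Suc (cell i)) = t i"
    using disjoint_intervals_grid[of T n s t] T st disj by auto
  define c where "c m = (\<Sum>i | i < n \<and> cell i = m. (u i)\<^sup>2)" for m
  have "(\<Sum>i<n. (u i)\<^sup>2 * (norm (B (t i) \<omega> - B (s i) \<omega>))\<^sup>2 / 2)
      = (\<Sum>m<k. c m * (norm (B (ts (Suc m)) \<omega> - B (ts m) \<omega>))\<^sup>2 / 2)" for \<omega>
  proof -
    have "(\<Sum>i<n. (u i)\<^sup>2 * (norm (B (t i) \<omega> - B (s i) \<omega>))\<^sup>2 / 2)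
        = (\<Sum>m<k. \<Sum>i | i < n \<and> cell i = m. (u i)\<^sup>2 * (norm (B (ts (Suc m)) \<omega> - B (ts m) \<omega>))\<^sup>2 / 2)"
      using cell by (subst sum.group[symmetric, of "{..<n}" "{..<k}" cell]) (auto intro!: sum.cong)
    then show ?thesis by (simp add: c_def sum_distrib_right sum_divide_distrib)
  qed
  then have "sigma2 M B T n s t u =
      (\<Sum>m<k. (ts (Suc m) - ts m) / (1 + c m * (ts (Suc m) - ts m))) / T"
    using std_BM_tilted_second_moment[OF BM, of ts k c] ts0 tsk mono
    unfolding sigma2_def phi_def weight_def by (simp add: c_def sum_nonneg)
  also have "\<dots> = (T - (\<Sum>i<n. t i - s i) + (\<Sum>i<n. (t i - s i) / ((t i - s i) * (u i)\<^sup>2 + 1))) / T"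
    unfolding c_def using sum_tilted_increment_variances[OF ts0 tsk inj cell] by simp
  finally show ?thesis using T by (simp add: diff_divide_distrib add_divide_distrib)
qed

end
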